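(* Let $q$ be a prime power and let $n_1,n_2$ be coprime odd positive integers, each coprime to $q$. If $x-1$ is the only SCRIM factor of $x^{n_1}-1$ and the only SCRIM factor of $x^{n_2}-1$ in $\mathbb{F}_{q^2}[x]$, then $x-1$ is the only SCRIM factor of $x^{n_1n_2}-1$ in $\mathbb{F}_{q^2}[x]$.
   Context: $\mathbb{F}_{q^2}$ is the finite field with $q^2$ elements. For $\alpha\in\mathbb{F}_{q^2}$ put $\bar\alpha=\alpha^q$, and for $f(x)=\sum_i f_ix^i$ put $\overline{f(x)}=\sum_i \bar f_i x^i$. For $f(x)$ with $f(0)\neq 0$, $f^*(x)=x^{\deg f}f(0)^{-1}f(1/x)$ and $f^\dagger(x)=\overline{f^*(x)}$. A polynomial is SCRIM if it is monic, irreducible over $\mathbb{F}_{q^2}$, has nonzero constant term, and satisfies $f=f^\dagger$. A SCRIM factor of $x^n-1$ is a SCRIM polynomial dividing $x^n-1$ in $\mathbb{F}_{q^2}[x]$. *)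

theory Defs
  imports "HOL-Computational_Algebra.Polynomial" "HOL-Number_Theory.Prime_Powers"
begin

text \<open>The ambient field is a finite field type 'a with CARD('a) = q^2.
  Conjugation: alpha |-> alpha^q, applied coefficientwise to polynomials.\<close>

definition conj_poly :: "nat \<Rightarrow> 'a::field poly \<Rightarrow> 'a poly" where
  "conj_poly q f = map_poly (\<lambda>a. a ^ q) f"

text \<open>f^*(x) = x^(deg f) * f(0)^(-1) * f(1/x); for f(0) nonzero,
  x^(deg f) f(1/x) is the reversed polynomial reflect_poly f.\<close>
definition recip_poly :: "'a::field poly \<Rightarrow> 'a poly" where
  "recip_poly f = smult (inverse (coeff f 0)) (reflect_poly f)"

definition dagger_poly :: "nat \<Rightarrow> 'a::field poly \<Rightarrow> 'a poly" where
  "dagger_poly q f = conj_poly q (recip_poly f)"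

definition SCRIM :: "nat \<Rightarrow> 'a::field poly \<Rightarrow> bool" where
  "SCRIM q f \<longleftrightarrow> lead_coeff f = 1 \<and> irreducible f \<and> coeff f 0 \<noteq> 0 \<and> f = dagger_poly q f"

definition SCRIM_factor :: "nat \<Rightarrow> nat \<Rightarrow> 'a::field poly \<Rightarrow> bool" where
  "SCRIM_factor q n f \<longleftrightarrow> SCRIM q f \<and> f dvd (monom 1 n - 1)"

end

theory Submission
  imports Defs "HOL-Computational_Algebra.Computational_Algebra"
begin

(* Let f be a SCRIM factor of x^(n1 n2) - 1, which is (x^n1 - 1) composed with x^n2. As f is
   prime, the polynomials h with f dividing h(x^n2) form an ideal whose monic generator g is
   irreducible and divides x^n1 - 1. Taking daggers is multiplicative (the coefficient map
   a |-> a^q is the Frobenius) and commutes with x |-> x^n2, so f = dagger f also divides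
   (dagger g)(x^n2); hence g divides dagger g, and both being monic of the same degree, g is
   SCRIM. By hypothesis g = x - 1, so f divides x^n2 - 1. Symmetrically f divides x^n1 - 1,
   and gcd n1 n2 = 1 leaves f dividing x - 1. *)

lemma coeff_pcompose_monom_one:
  fixes p :: "'a::comm_ring_1 poly"
  assumes "m > 0"
  shows "coeff (pcompose p (monom 1 m)) k = (if m dvd k then coeff p (k div m) else 0)"
  using assms
proof (induction p arbitrary: k)
  case (pCons a p)
  show ?case
  proof (cases "k < m")
    case True
    then show ?thesis using pCons.prems
      by (cases k) (auto simp: pcompose_pCons coeff_monom_mult dest: dvd_imp_le)
  next
    case False
    then have "m dvd k \<longleftrightarrow> m dvd k - m" and "k div m = Suc ((k - m) div m)"
      using pCons.prems by (auto simp: dvd_minus_self div_if)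
    then show ?thesis using False pCons.IH[of "k - m"] pCons.prems
      by (simp add: pcompose_pCons coeff_monom_mult coeff_pCons split: nat.split)
  qed
qed simp

lemma pcompose_monom_one_monom_one:
  assumes "m > 0"
  shows "pcompose (monom (1::'a::comm_ring_1) k) (monom 1 m) = monom 1 (k * m)"
  using assms by (intro poly_eqI) (auto simp: coeff_pcompose_monom_one coeff_monom, metis dvd_triv_right)

lemma pcompose_monom_one_minus_one:
  assumes "m > 0"
  shows "pcompose (monom (1::'a::comm_ring_1) k - 1) (monom 1 m) = monom 1 (k * m) - 1"
  using assms by (simp add: pcompose_diff pcompose_1 pcompose_monom_one_monom_one)

lemma map_poly_pcompose_monom_one:
  fixes p :: "'a::comm_ring_1 poly" and f :: "'a \<Rightarrow> 'b::comm_ring_1"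
  assumes "m > 0" "f 0 = 0"
  shows "map_poly f (pcompose p (monom 1 m)) = pcompose (map_poly f p) (monom 1 m)"
  using assms by (intro poly_eqI) (simp add: coeff_map_poly coeff_pcompose_monom_one)

lemma reflect_poly_pcompose_monom_one:
  fixes p :: "'a::idom poly"
  assumes "m > 0"
  shows "reflect_poly (pcompose p (monom 1 m)) = pcompose (reflect_poly p) (monom 1 m)"
proof (rule poly_eqI)
  fix k
  have deg: "degree (pcompose p (monom 1 m)) = degree p * m"
    by (simp add: degree_pcompose degree_monom_eq)
  show "coeff (reflect_poly (pcompose p (monom 1 m))) k = coeff (pcompose (reflect_poly p) (monom 1 m)) k"
  proof (cases "m dvd k")
    case True
    then obtain j where "k = m * j" by blast
    moreover have "degree p * m - m * j = m * (degree p - j)"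
      by (simp add: diff_mult_distrib2 mult.commute)
    ultimately show ?thesis using assms
      by (auto simp: coeff_reflect_poly deg coeff_pcompose_monom_one mult.commute)
  next
    case False
    then have "\<not> m dvd degree p * m - k" if "k \<le> degree p * m"
      using that by (metis dvd_diff_nat dvd_triv_right diff_diff_cancel)
    then show ?thesis using assms False
      by (auto simp: coeff_reflect_poly deg coeff_pcompose_monom_one)
  qed
qed

lemma x_minus_one_eq_monom: "[:-1, 1:] = monom (1::'a::comm_ring_1) 1 - 1"
  by (simp add: monom_Suc monom_0 one_pCons)

lemma monom_one_minus_one_dvd_mult:
  "monom (1::'a::comm_ring_1) a - 1 dvd monom 1 (a * k) - 1"
proof -
  have "monom (1::'a) (a * k) = monom 1 a ^ k" by (simp add: monom_power)
  then show ?thesis by (simp add: power_diff_1_eq)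
qed

lemma dvd_monom_one_minus_one_gcd:
  fixes p :: "'a::comm_ring_1 poly"
  assumes a: "p dvd monom 1 a - 1" and b: "p dvd monom 1 b - 1"
  shows "p dvd monom 1 (gcd a b) - 1"
proof (cases "a = 0")
  case False
  then obtain x y where xy: "a * x = b * y + gcd a b" using bezout_nat by blast
  have "monom 1 (gcd a b) - 1
      = (monom (1::'a) (a * x) - 1) - monom 1 (gcd a b) * (monom 1 (b * y) - 1)"
    by (simp add: xy algebra_simps mult_monom)
  also have "p dvd \<dots>"
    using dvd_trans[OF a monom_one_minus_one_dvd_mult] dvd_trans[OF b monom_one_minus_one_dvd_mult]
    by (metis dvd_diff dvd_mult)
  finally show ?thesis .
qed (use b in simp)

lemma coeff_0_ne_0_if_dvd_monom_minus_one:
  fixes g :: "'a::comm_ring_1 poly"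
  assumes "g dvd monom 1 n - 1" "n > 0"
  shows "coeff g 0 \<noteq> 0"
  using assms by (auto elim!: dvdE simp: coeff_mult_0 dest: arg_cong[of _ _ "\<lambda>p. coeff p 0"])

lemma monic_poly_dvd_eq:
  fixes p s :: "'a::idom poly"
  assumes "p dvd s" "lead_coeff p = 1" "lead_coeff s = 1" "degree s \<le> degree p"
  shows "p = s"
proof -
  obtain c where s: "s = p * c" using assms(1) by blast
  have "p \<noteq> 0" "c \<noteq> 0" using assms(2,3) s by auto
  then have "degree c = 0" using assms(4) s by (simp add: degree_mult_eq)
  moreover have "lead_coeff c = 1" using assms(2,3) s by (simp add: lead_coeff_mult)
  ultimately have "c = 1" by (metis degree_0_id one_pCons)
  then show ?thesis using s by simp
qed

lemma field_poly_ideal_monic_generator: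
  fixes I :: "'a::field poly set"
  assumes "p \<in> I" "p \<noteq> 0"
    and diff: "\<And>a b. a \<in> I \<Longrightarrow> b \<in> I \<Longrightarrow> a - b \<in> I"
    and mult: "\<And>a c. a \<in> I \<Longrightarrow> c * a \<in> I"
  obtains g where "g \<in> I" "lead_coeff g = 1" "\<And>a. a \<in> I \<Longrightarrow> g dvd a"
proof -
  obtain h where h: "h \<in> I" "h \<noteq> 0" and min: "\<And>a. a \<in> I \<Longrightarrow> a \<noteq> 0 \<Longrightarrow> degree h \<le> degree a"
    using ex_has_least_nat[of "\<lambda>a. a \<in> I \<and> a \<noteq> 0" p degree] assms(1,2) by blast
  have h_dvd: "h dvd a" if "a \<in> I" for a
  proof -
    have "a mod h = a - (a div h) * h" by (simp add: minus_div_mult_eq_mod)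
    then have "a mod h \<in> I" using that h(1) diff mult by simp
    then have "a mod h = 0" using min degree_mod_less[OF h(2)] by (meson not_le)
    then show ?thesis by (rule mod_0_imp_dvd)
  qed
  define g where "g = smult (inverse (lead_coeff h)) h"
  have "g dvd a" if "a \<in> I" for a using h_dvd[OF that] h(2) by (simp add: g_def smult_dvd_iff)
  moreover have "g \<in> I" "lead_coeff g = 1" using h mult[of h "[:inverse (lead_coeff h):]"] by (simp_all add: g_def)
  ultimately show thesis using that by blast
qed

lemma dvd_pcompose_minimal_polyE:
  fixes f p r :: "'a::field poly"
  assumes "prime_elem f" "f dvd pcompose p r" "p \<noteq> 0"
  obtains g where "lead_coeff g = 1" "irreducible g" "f dvd pcompose g r"
    "\<And>h. f dvd pcompose h r \<Longrightarrow> g dvd h"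
proof -
  obtain g where g: "f dvd pcompose g r" "lead_coeff g = 1"
    and min: "\<And>h. f dvd pcompose h r \<Longrightarrow> g dvd h"
    by (rule field_poly_ideal_monic_generator[of p "{h. f dvd pcompose h r}"])
      (use assms in \<open>auto simp: pcompose_diff pcompose_mult\<close>)
  have "irreducible g"
  proof (rule irreducibleI)
    show "g \<noteq> 0" using g(2) by auto
    show "\<not> is_unit g"
    proof
      assume "is_unit g"
      then obtain c where "g = [:c:]" "c dvd 1" by (auto simp: is_unit_poly_iff)
      then have "is_unit (pcompose g r)" by (simp add: is_unit_const_poly_iff)
      then show False using g(1) assms(1) by (meson dvd_unit_imp_unit prime_elem_not_unit)
    qed
    fix a b assume ab: "g = a * b"
    then have "f dvd pcompose a r \<or> f dvd pcompose b r"
      using g(1) assms(1) by (simp add: pcompose_mult prime_elem_dvd_mult_iff)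
    then have "g dvd a \<or> g dvd b" using min by blast
    moreover have "a \<noteq> 0" "b \<noteq> 0" using ab \<open>g \<noteq> 0\<close> by auto
    ultimately show "is_unit a \<or> is_unit b"
      using ab by (metis dvd_mult_cancel_left mult.commute mult.right_neutral)
  qed
  then show thesis using that g min by blast
qed

lemma of_nat_card_UNIV_eq_0:
  assumes "finite (UNIV :: 'a::ring_1 set)"
  shows "of_nat (card (UNIV :: 'a set)) = (0::'a)"
proof -
  have "(\<Sum>x\<in>UNIV. x + 1) = (\<Sum>x\<in>(UNIV::'a set). x)"
    by (rule sum.reindex_bij_witness[of _ "\<lambda>y. y - 1" "\<lambda>y. y + 1"]) auto
  then show ?thesis by (simp add: sum.distrib)
qed

lemma primepow_card_eq_CHAR_power:
  assumes "primepow q" "card (UNIV :: 'a::{finite,field} set) = q ^ k" "k > 0"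
  obtains e where "prime CHAR('a)" "q = CHAR('a) ^ e"
proof -
  obtain p j where p: "prime p" "q = p ^ j" using assms(1) unfolding primepow_def by blast
  have "prime CHAR('a)" by (rule prime_CHAR_semidom) (simp add: finite_imp_CHAR_pos)
  moreover have "CHAR('a) dvd card (UNIV :: 'a set)"
    using of_nat_card_UNIV_eq_0[where 'a = 'a] by (simp add: of_nat_eq_0_iff_char_dvd)
  then have "CHAR('a) dvd p ^ (j * k)" using assms(2) p(2) by (simp add: power_mult)
  ultimately have "CHAR('a) = p"
    using p(1) by (metis prime_dvd_power primes_dvd_imp_eq)
  then show thesis using that \<open>prime CHAR('a)\<close> p(2) by blast
qed

lemma map_poly_power_CHAR_mult:
  fixes p s :: "'a::comm_ring_1 poly"
  assumes "prime CHAR('a)" "q = CHAR('a) ^ e"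
  shows "map_poly (\<lambda>a. a ^ q) (p * s) = map_poly (\<lambda>a. a ^ q) p * map_poly (\<lambda>a. a ^ q) s"
proof (rule poly_eqI)
  fix n
  have "q > 0" using assms by (simp add: prime_gt_0_nat)
  then have "coeff (map_poly (\<lambda>a. a ^ q) (p * s)) n = (\<Sum>i\<le>n. coeff p i * coeff s (n - i)) ^ q"
    by (simp add: coeff_map_poly coeff_mult zero_power)
  also have "\<dots> = (\<Sum>i\<le>n. (coeff p i * coeff s (n - i)) ^ q)"
    by (rule freshmans_dream_sum'[OF assms])
  also have "\<dots> = coeff (map_poly (\<lambda>a. a ^ q) p * map_poly (\<lambda>a. a ^ q) s) n"
    using \<open>q > 0\<close> by (simp add: coeff_map_poly coeff_mult zero_power power_mult_distrib)
  finally show "coeff (map_poly (\<lambda>a. a ^ q) (p * s)) n = coeff (map_poly (\<lambda>a. a ^ q) p * map_poly (\<lambda>a. a ^ q) s) n" .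
qed

lemma recip_poly_mult: "recip_poly (p * s) = recip_poly p * recip_poly s"
  by (simp add: recip_poly_def reflect_poly_mult coeff_mult_0 mult.commute)

lemma dagger_poly_mult:
  fixes p s :: "'a::field poly"
  assumes "prime CHAR('a)" "q = CHAR('a) ^ e"
  shows "dagger_poly q (p * s) = dagger_poly q p * dagger_poly q s"
  by (simp add: dagger_poly_def conj_poly_def recip_poly_mult map_poly_power_CHAR_mult[OF assms])

lemma dagger_poly_pcompose_monom_one:
  fixes p :: "'a::field poly"
  assumes "m > 0" "q > 0"
  shows "dagger_poly q (pcompose p (monom 1 m)) = pcompose (dagger_poly q p) (monom 1 m)"
  using assms
  by (simp add: dagger_poly_def conj_poly_def recip_poly_def poly_0_coeff_0 reflect_poly_pcompose_monom_one
      map_poly_pcompose_monom_one flip: pcompose_smult)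

lemma
  fixes p :: "'a::field poly"
  assumes "coeff p 0 \<noteq> 0" "q > 0"
  shows lead_coeff_dagger_poly: "lead_coeff (dagger_poly q p) = 1"
    and degree_dagger_poly: "degree (dagger_poly q p) = degree p"
proof -
  have "degree (recip_poly p) = degree p" "lead_coeff (recip_poly p) = 1"
    using assms by (auto simp: recip_poly_def coeff_reflect_poly)
  then show "lead_coeff (dagger_poly q p) = 1" "degree (dagger_poly q p) = degree p"
    using assms by (simp_all add: dagger_poly_def conj_poly_def degree_map_poly coeff_map_poly)
qed

lemma minimal_poly_dagger_poly_eq:
  fixes f g :: "'a::field poly"
  assumes "prime CHAR('a)" "q = CHAR('a) ^ e" "m > 0"
    and "dagger_poly q f = f" "coeff g 0 \<noteq> 0" "lead_coeff g = 1"
    and "f dvd pcompose g (monom 1 m)"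
    and min: "\<And>h. f dvd pcompose h (monom 1 m) \<Longrightarrow> g dvd h"
  shows "dagger_poly q g = g"
proof -
  have "q > 0" using assms(1,2) by (simp add: prime_gt_0_nat)
  obtain k where "pcompose g (monom 1 m) = f * k" using assms(7) by blast
  then have "pcompose (dagger_poly q g) (monom 1 m) = f * dagger_poly q k"
    using assms(3,4) \<open>q > 0\<close>
    by (metis dagger_poly_mult[OF assms(1,2)] dagger_poly_pcompose_monom_one)
  then have "g dvd dagger_poly q g" using min by simp
  moreover note \<open>lead_coeff g = 1\<close>
  moreover have "lead_coeff (dagger_poly q g) = 1" "degree (dagger_poly q g) = degree g"
    using assms(5) \<open>q > 0\<close> by (rule lead_coeff_dagger_poly, rule degree_dagger_poly)
  ultimately show ?thesis by (metis monic_poly_dvd_eq order_refl)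
qed

lemma SCRIM_factor_dvd_if_unique_SCRIM_factor:
  fixes f :: "'a::field poly"
  assumes "prime CHAR('a)" "q = CHAR('a) ^ e" "n1 > 0" "n2 > 0"
    and unique: "\<And>g :: 'a poly. SCRIM_factor q n1 g \<Longrightarrow> g = [:-1, 1:]"
    and f: "SCRIM_factor q (n1 * n2) f"
  shows "f dvd monom 1 n2 - 1"
proof -
  have "prime_elem f" using f by (simp add: SCRIM_factor_def SCRIM_def field_poly_irreducible_imp_prime)
  moreover have "f dvd pcompose (monom 1 n1 - 1) (monom 1 n2)"
    using f assms(4) by (simp add: SCRIM_factor_def pcompose_monom_one_minus_one)
  moreover have "monom (1::'a) n1 - 1 \<noteq> 0"
    using coeff_0_ne_0_if_dvd_monom_minus_one[OF dvd_refl assms(3)] by (metis coeff_0)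
  ultimately obtain g where g: "lead_coeff g = 1" "irreducible g" "f dvd pcompose g (monom 1 n2)"
    and min: "\<And>h. f dvd pcompose h (monom 1 n2) \<Longrightarrow> g dvd h"
    using dvd_pcompose_minimal_polyE by blast
  have "g dvd monom 1 n1 - 1"
    using min f assms(4) by (simp add: SCRIM_factor_def pcompose_monom_one_minus_one)
  moreover have "coeff g 0 \<noteq> 0"
    using coeff_0_ne_0_if_dvd_monom_minus_one[OF calculation assms(3)] .
  moreover have "dagger_poly q g = g"
    using minimal_poly_dagger_poly_eq[OF assms(1,2,4) _ _ g(1,3) min] f calculation(2)
    by (simp add: SCRIM_factor_def SCRIM_def)
  ultimately have "SCRIM_factor q n1 g" using g(1,2) by (auto simp: SCRIM_factor_def SCRIM_def)
  then have "g = monom 1 1 - 1" unfolding x_minus_one_eq_monom[symmetric] by (rule unique)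
  then show ?thesis using g(3) assms(4) by (simp add: pcompose_monom_one_minus_one)
qed

lemma SCRIM_dvd_x_minus_one_eq:
  fixes f :: "'a::field poly"
  assumes "SCRIM q f" "f dvd [:-1, 1:]"
  shows "f = [:-1, 1:]"
proof (rule monic_poly_dvd_eq)
  have "f \<noteq> 0" "\<not> is_unit f" using assms(1) by (auto simp: SCRIM_def irreducible_def)
  then show "degree [:-1, 1:] \<le> degree f" by (simp add: is_unit_iff_degree)
qed (use assms in \<open>simp_all add: SCRIM_def\<close>)

theorem theorem2p9:
  fixes q n1 n2 :: nat
  assumes "primepow q"
    and "card (UNIV :: 'a::{finite,field} set) = q ^ 2"
    and "odd n1" and "odd n2" and "n1 > 0" and "n2 > 0"
    and "coprime n1 n2" and "coprime n1 q" and "coprime n2 q"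
    and "{f :: 'a poly. SCRIM_factor q n1 f} = {[:-1, 1:]}"
    and "{f :: 'a poly. SCRIM_factor q n2 f} = {[:-1, 1:]}"
  shows "{f :: 'a poly. SCRIM_factor q (n1 * n2) f} = {[:-1, 1:]}"
proof -
  obtain e where char: "prime CHAR('a)" "q = CHAR('a) ^ e"
    using primepow_card_eq_CHAR_power[OF assms(1,2)] by auto
  have unique1: "g = [:-1, 1:]" if "SCRIM_factor q n1 g" for g :: "'a poly"
    using assms(10) that by blast
  have unique2: "g = [:-1, 1:]" if "SCRIM_factor q n2 g" for g :: "'a poly"
    using assms(11) that by blast
  have "SCRIM_factor q n1 ([:-1, 1:] :: 'a poly)" using assms(10) by blast
  then have "SCRIM_factor q (n1 * n2) ([:-1, 1:] :: 'a poly)"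
    by (auto simp: SCRIM_factor_def intro: dvd_trans[OF _ monom_one_minus_one_dvd_mult])
  moreover have "f = [:-1, 1:]" if f: "SCRIM_factor q (n1 * n2) f" for f :: "'a poly"
  proof -
    have "f dvd monom 1 n2 - 1"
      using SCRIM_factor_dvd_if_unique_SCRIM_factor[OF char assms(5,6) unique1 f] .
    moreover have "f dvd monom 1 n1 - 1"
      using SCRIM_factor_dvd_if_unique_SCRIM_factor[OF char assms(6,5) unique2] f
      by (simp add: mult.commute)
    ultimately have "f dvd monom 1 (gcd n1 n2) - 1" by (rule dvd_monom_one_minus_one_gcd[rotated])
    then have "f dvd [:-1, 1:]" using assms(7) by (simp add: x_minus_one_eq_monom)
    then show ?thesis using f by (intro SCRIM_dvd_x_minus_one_eq[of q]) (simp_all add: SCRIM_factor_def)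
  qed
  ultimately show ?thesis by blast
qed

end
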